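(* Let $\mathcal{G}_1$ be an arbitrary two-terminal series-parallel graph with source $s_1$, sink $t_1$ and effective resistance $\rho^{\mathrm{eff}}_{s_1,t_1}$ between them. Let $\mathcal{G}_2$ be a 1-path (a single edge) with source $s_2$, sink $t_2$ and effective resistance $\rho^{\mathrm{eff}}_{s_2,t_2}$. For each $i$, consider the leader-follower system on $\mathcal{G}_i$ with the source $s_i$ grounded and control matrix $B_i=e_{t_i}$. Let $\mathcal{H}_2^i$ denote its $\mathcal{H}_2$ norm. If $\rho^{\mathrm{eff}}_{s_1,t_1}=\rho^{\mathrm{eff}}_{s_2,t_2}$, then $(\mathcal{H}_2^1)^2=(\mathcal{H}_2^2)^2$.
   Context: Graphs are undirected with positive edge weights (conductances). Effective resistance is computed in the corresponding electrical network. Two-terminal series-parallel (TTSP) graphs are defined recursively. A single edge with designated source and sink (a 1-path) is TTSP. If $\mathcal{G}_1,\mathcal{G}_2$ are TTSP with sources $s_1,s_2$ and sinks $t_1,t_2$, then: - their series join (identify $t_1$ with $s_2$; new source $s_1$, new sink $t_2$) is TTSP; - their parallel join (identify $s_1$ with $s_2$ and $t_1$ with $t_2$) is TTSP. Multiple edges are allowed. For a TTSP graph with source $s$ grounded (state fixed at $0$), let $L_D$ be the Dirichlet Laplacian: the weighted Laplacian with the row and column of $s$ deleted. The system is $\dot x=-L_Dx+Bu$, $y=x$. Its squared $\mathcal{H}_2$ norm is $-\tfrac12\mathrm{Tr}\big(B^T(-L_D)^{-1}B\big)=\tfrac12\mathrm{Tr}\big(B^TL_D^{-1}B\big)$. 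*)

theory Defs
  imports "Jordan_Normal_Form.Gauss_Jordan_Elimination" "HOL-Library.Multiset"
begin

text \<open>Weighted undirected multigraphs: a finite vertex set V of naturals and a multiset
of edges (u, v, c) joining u and v with conductance c.\<close>

type_synonym wedge = "nat \<times> nat \<times> real"

text \<open>Two-terminal series-parallel graphs (V, E) with source s and sink t.
Vertex labels are concrete; the join operations require the two pieces to share
exactly the identified vertices.\<close>

inductive ttsp :: "nat set \<Rightarrow> wedge multiset \<Rightarrow> nat \<Rightarrow> nat \<Rightarrow> bool" where
  edge: "s \<noteq> t \<Longrightarrow> c > 0 \<Longrightarrow> ttsp {s, t} {#(s, t, c)#} s t"
| series: "ttsp V1 E1 s m \<Longrightarrow> ttsp V2 E2 m t \<Longrightarrow> V1 \<inter> V2 = {m}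
           \<Longrightarrow> ttsp (V1 \<union> V2) (E1 + E2) s t"
| parallel: "ttsp V1 E1 s t \<Longrightarrow> ttsp V2 E2 s t \<Longrightarrow> V1 \<inter> V2 = {s, t}
           \<Longrightarrow> ttsp (V1 \<union> V2) (E1 + E2) s t"

definition lap :: "wedge multiset \<Rightarrow> nat \<Rightarrow> nat \<Rightarrow> real" where
  "lap E u v =
    (if u = v then (\<Sum>(a, b, c) \<in># E. if (a = u \<or> b = u) \<and> a \<noteq> b then c else 0)
     else - (\<Sum>(a, b, c) \<in># E. if (a = u \<and> b = v) \<or> (a = v \<and> b = u) then c else 0))"

text \<open>Effective resistance between s and t in the electrical network: inject unit current
at t and extract it at s; the potential p (zero off V, grounded p s = 0) satisfies
Kirchhoff's current law (L p)(u) = [u = t] - [u = s] at every vertex u, and the effective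
resistance is the potential difference p t - p s.\<close>
definition eff_res :: "nat set \<Rightarrow> wedge multiset \<Rightarrow> nat \<Rightarrow> nat \<Rightarrow> real" where
  "eff_res V E s t =
    (let p = (THE p. (\<forall>u. u \<notin> V \<longrightarrow> p u = 0) \<and> p s = 0 \<and>
                     (\<forall>u\<in>V. (\<Sum>v\<in>V. lap E u v * p v) =
                              (if u = t then 1 else 0) - (if u = s then 1 else 0)))
     in p t - p s)"

definition free_verts :: "nat set \<Rightarrow> nat \<Rightarrow> nat list" where
  "free_verts V s = sorted_list_of_set (V - {s})"

definition dirichlet_lap :: "nat set \<Rightarrow> wedge multiset \<Rightarrow> nat \<Rightarrow> real mat" where
  "dirichlet_lap V E s =
    (let vs = free_verts V s; m = length vs
     in mat m m (\<lambda>(i, j). lap E (vs ! i) (vs ! j)))"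

definition ctrl_vec :: "nat set \<Rightarrow> nat \<Rightarrow> nat \<Rightarrow> real mat" where
  "ctrl_vec V s t =
    (let vs = free_verts V s in mat (length vs) 1 (\<lambda>(i, j). if vs ! i = t then 1 else 0))"

definition mat_trace :: "real mat \<Rightarrow> real" where
  "mat_trace A = (\<Sum>i<dim_row A. A $$ (i, i))"

definition H2_sq :: "nat set \<Rightarrow> wedge multiset \<Rightarrow> nat \<Rightarrow> real mat \<Rightarrow> real" where
  "H2_sq V E s B =
    1 / 2 * mat_trace (transpose_mat B * the (mat_inverse (dirichlet_lap V E s)) * B)"

end

theory Submission
  imports Defs "Jordan_Normal_Form.Determinant"
begin

text \<open>For a connected network grounded at s, Kirchhoff's law says that the potential
produced by a unit current injected at t is L_D^{-1} e_t, so the effective resistance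
between s and t is the diagonal entry (L_D^{-1})_{tt}. With B = e_t the quadratic form
B^T L_D^{-1} B picks out the same entry, hence H2^2 is half the effective resistance for
every connected network, in particular for every TTSP graph, and equal resistances give
equal H2 norms. L_D is invertible because a potential that is grounded at s and harmonic
elsewhere has zero energy sum c (f a - f b)^2, so it is constant across every edge and
therefore vanishes.\<close>

lemma sum_mset_nonneg_eq_0_iff:
  fixes f :: "'a \<Rightarrow> 'b::ordered_comm_monoid_add"
  assumes "\<And>x. x \<in># M \<Longrightarrow> 0 \<le> f x"
  shows "(\<Sum>x\<in>#M. f x) = 0 \<longleftrightarrow> (\<forall>x\<in>#M. f x = 0)"
proof -
  obtain xs where "M = mset xs" by (metis ex_mset)
  then show ?thesis
    using assms sum_list_nonneg_eq_0_iff[of "map f xs"]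
    by (force simp: sum_mset_sum_list simp flip: mset_map)
qed

lemma sum_sum_mset_swap:
  "(\<Sum>u\<in>A. \<Sum>x\<in>#M. g x u) = (\<Sum>x\<in>#M. \<Sum>u\<in>A. g x u)"
  by (induction M) (simp_all add: sum.distrib)

definition lap_apply :: "nat set \<Rightarrow> wedge multiset \<Rightarrow> (nat \<Rightarrow> real) \<Rightarrow> nat \<Rightarrow> real" where
  "lap_apply V E f u = (\<Sum>v\<in>V. lap E u v * f v)"

definition edge_outflow :: "(nat \<Rightarrow> real) \<Rightarrow> wedge \<Rightarrow> nat \<Rightarrow> real" where
  "edge_outflow f = (\<lambda>(a, b, c) u.
     if u = a then c * (f a - f b) else if u = b then c * (f b - f a) else 0)"

lemma lap_apply_diff:
  "lap_apply V E (\<lambda>v. f v - g v) u = lap_apply V E f u - lap_apply V E g u"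
  by (simp add: lap_apply_def right_diff_distrib sum_subtractf)

lemma lap_apply_single_edge:
  assumes "finite V" "a \<in> V" "b \<in> V" "a \<noteq> b"
  shows "lap_apply V {#(a, b, c)#} f u = edge_outflow f (a, b, c) u"
proof -
  have "lap {#(a, b, c)#} u v * f v =
     (if v = a then (if u = a then c else if u = b then - c else 0) * f a else 0) +
     (if v = b then (if u = b then c else if u = a then - c else 0) * f b else 0)" for v
    using assms(4) by (auto simp: lap_def)
  then show ?thesis
    using assms by (simp add: lap_apply_def edge_outflow_def sum.distrib algebra_simps)
qed

lemma lap_apply_add_edge:
  assumes "finite V" "a \<in> V" "b \<in> V" "a \<noteq> b"
  shows "lap_apply V (add_mset (a, b, c) E) f u = edge_outflow f (a, b, c) u + lap_apply V E f u"
proof -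
  have "lap (add_mset (a, b, c) E) u v = lap {#(a, b, c)#} u v + lap E u v" for v
    by (simp add: lap_def)
  then have "lap_apply V (add_mset (a, b, c) E) f u = lap_apply V {#(a, b, c)#} f u + lap_apply V E f u"
    by (simp add: lap_apply_def sum.distrib distrib_right)
  then show ?thesis
    using lap_apply_single_edge[OF assms] by simp
qed

lemma lap_apply_eq_sum_edge_outflow:
  assumes "finite V" and "\<And>a b c. (a, b, c) \<in># E \<Longrightarrow> a \<in> V \<and> b \<in> V \<and> a \<noteq> b"
  shows "lap_apply V E f u = (\<Sum>e\<in>#E. edge_outflow f e u)"
  using assms(2)
proof (induction E)
  case empty
  have "lap {#} u v = 0" for v
    by (simp add: lap_def)
  then show ?case
    by (simp add: lap_apply_def)
next
  case (add e E)
  obtain a b c where e: "e = (a, b, c)" by (cases e)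
  have "a \<in> V" "b \<in> V" "a \<noteq> b"
    using add.prems e by auto
  moreover have "lap_apply V E f u = (\<Sum>e\<in>#E. edge_outflow f e u)"
    using add.prems by (intro add.IH) auto
  ultimately show ?case
    using e by (simp add: lap_apply_add_edge[OF assms(1)])
qed

lemma sum_edge_outflow:
  assumes "finite V" "a \<in> V" "b \<in> V" "a \<noteq> b"
  shows "(\<Sum>u\<in>V. edge_outflow f (a, b, c) u) = 0"
    and "(\<Sum>u\<in>V. f u * edge_outflow f (a, b, c) u) = c * (f a - f b)\<^sup>2"
proof -
  have outflow: "edge_outflow f (a, b, c) u =
      (if u = a then c * (f a - f b) else 0) + (if u = b then c * (f b - f a) else 0)" for u
    using assms(4) by (simp add: edge_outflow_def)
  show "(\<Sum>u\<in>V. edge_outflow f (a, b, c) u) = 0"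
    using assms by (simp add: outflow sum.distrib algebra_simps)
  have "f u * edge_outflow f (a, b, c) u =
      (if u = a then f a * (c * (f a - f b)) else 0) + (if u = b then f b * (c * (f b - f a)) else 0)" for u
    by (simp add: outflow distrib_left)
  then show "(\<Sum>u\<in>V. f u * edge_outflow f (a, b, c) u) = c * (f a - f b)\<^sup>2"
    using assms by (simp add: sum.distrib power2_eq_square algebra_simps)
qed

definition extend_vec :: "'a list \<Rightarrow> 'b::zero vec \<Rightarrow> 'a \<Rightarrow> 'b" where
  "extend_vec xs y x = (if x \<in> set xs then y $ the_inv_into {..<length xs} ((!) xs) x else 0)"

lemma extend_vec_nth: "distinct xs \<Longrightarrow> i < length xs \<Longrightarrow> extend_vec xs y (xs ! i) = y $ i"
  by (simp add: extend_vec_def the_inv_into_f_f inj_on_nth)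

lemma set_free_verts: "finite V \<Longrightarrow> set (free_verts V s) = V - {s}"
  by (simp add: free_verts_def)

lemma distinct_free_verts: "distinct (free_verts V s)"
  by (simp add: free_verts_def)

lemma dirichlet_lap_carrier:
  "dirichlet_lap V E s \<in> carrier_mat (length (free_verts V s)) (length (free_verts V s))"
  by (simp add: dirichlet_lap_def Let_def)

lemma ctrl_vec_carrier: "ctrl_vec V s t \<in> carrier_mat (length (free_verts V s)) 1"
  by (simp add: ctrl_vec_def Let_def)

lemma col_ctrl_vec:
  assumes "k < length (free_verts V s)"
  shows "col (ctrl_vec V s (free_verts V s ! k)) 0 = unit_vec (length (free_verts V s)) k"
  using assms distinct_free_verts[of V s]
  by (intro eq_vecI) (auto simp: ctrl_vec_def Let_def nth_eq_iff_index_eq)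

lemma unit_col_quadratic_form:
  fixes M B :: "'a::semiring_1 mat"
  assumes "M \<in> carrier_mat n n" "B \<in> carrier_mat n 1" "col B 0 = unit_vec n k" "k < n"
  shows "(transpose_mat B * M * B) $$ (0, 0) = M $$ (k, k)"
proof -
  have "(transpose_mat B * M * B) $$ (0, 0) = (transpose_mat B * (M * B)) $$ (0, 0)"
    using assms(1,2) by (simp add: assoc_mult_mat[of _ 1 n _ n _ 1])
  also have "\<dots> = col B 0 \<bullet> (M *\<^sub>v col B 0)"
    using assms(1,2) by (simp add: row_transpose)
  also have "\<dots> = (M *\<^sub>v unit_vec n k) $ k"
    unfolding assms(3) using assms(1,4) by (intro scalar_prod_left_unit) auto
  also have "\<dots> = M $$ (k, k)"
    using assms by simp
  finally show ?thesis .
qed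

locale grounded_network =
  fixes V :: "nat set" and E :: "wedge multiset" and s :: nat
  assumes finite_V: "finite V"
    and source_in_V: "s \<in> V"
    and edge_endpoints: "\<And>a b c. (a, b, c) \<in># E \<Longrightarrow> a \<in> V \<and> b \<in> V \<and> a \<noteq> b"
    and conductance_pos: "\<And>a b c. (a, b, c) \<in># E \<Longrightarrow> c > 0"
    \<comment> \<open>connectivity: a potential with no drop across any edge is constant\<close>
    and connected: "\<And>f :: nat \<Rightarrow> real. \<And>u.
      (\<And>a b c. (a, b, c) \<in># E \<Longrightarrow> f a = f b) \<Longrightarrow> u \<in> V \<Longrightarrow> f u = f s"
begin

lemma edge_outflow_sums:
  assumes "e \<in># E"
  shows "(\<Sum>u\<in>V. edge_outflow f e u) = 0"
    and "(\<Sum>u\<in>V. f u * edge_outflow f e u) = (case e of (a, b, c) \<Rightarrow> c * (f a - f b)\<^sup>2)"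
  using assms edge_endpoints[of "fst e" "fst (snd e)" "snd (snd e)"] sum_edge_outflow[OF finite_V]
  by (cases e; simp)+

lemma sum_lap_apply: "(\<Sum>u\<in>V. lap_apply V E f u) = 0"
  by (simp add: lap_apply_eq_sum_edge_outflow[OF finite_V edge_endpoints] sum_sum_mset_swap
      edge_outflow_sums(1) cong: image_mset_cong)

lemma lap_energy:
  "(\<Sum>u\<in>V. f u * lap_apply V E f u) = (\<Sum>(a, b, c)\<in>#E. c * (f a - f b)\<^sup>2)"
proof -
  have "f u * lap_apply V E f u = (\<Sum>e\<in>#E. f u * edge_outflow f e u)" for u
    by (simp add: lap_apply_eq_sum_edge_outflow[OF finite_V edge_endpoints] sum_mset_distrib_left
        image_mset.compositionality comp_def)
  then show ?thesis
    by (simp add: sum_sum_mset_swap edge_outflow_sums(2) cong: image_mset_cong)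
qed

lemma grounded_harmonic_eq_0:
  assumes "f s = 0" and harmonic: "\<And>u. u \<in> V - {s} \<Longrightarrow> lap_apply V E f u = 0"
    and "u \<in> V"
  shows "f u = 0"
proof -
  have "(\<Sum>(a, b, c)\<in>#E. c * (f a - f b)\<^sup>2) = 0"
    unfolding lap_energy[symmetric] using assms(1) harmonic by (intro sum.neutral) auto
  then have "\<forall>(a, b, c)\<in>#E. c * (f a - f b)\<^sup>2 = 0"
    using conductance_pos by (subst (asm) sum_mset_nonneg_eq_0_iff) (fastforce simp: less_imp_le)+
  then have "f a = f b" if "(a, b, c) \<in># E" for a b c
    using that conductance_pos[OF that] by fastforce
  then show ?thesis
    using connected[of f u] assms(1,3) by simp
qed

lemma eff_res_eqI:
  assumes "t \<in> V - {s}"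
    and outside: "\<And>u. u \<notin> V \<Longrightarrow> p u = 0" and source: "p s = 0"
    and kcl: "\<And>u. u \<in> V - {s} \<Longrightarrow> lap_apply V E p u = (if u = t then 1 else 0)"
  shows "eff_res V E s t = p t"
proof -
  define P where "P q \<longleftrightarrow> (\<forall>u. u \<notin> V \<longrightarrow> q u = 0) \<and> q s = 0 \<and>
    (\<forall>u\<in>V. lap_apply V E q u = (if u = t then 1 else 0) - (if u = s then 1 else 0))" for q
  \<comment> \<open>Kirchhoff's law at the grounded source follows from conservation of current\<close>
  have "lap_apply V E p s = - (\<Sum>u\<in>V - {s}. lap_apply V E p u)"
    using sum_lap_apply[of p] finite_V source_in_V by (simp add: sum.remove eq_neg_iff_add_eq_0)
  also have "\<dots> = -1"
    using assms(1) finite_V by (simp add: kcl)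
  finally have "P p"
    using assms unfolding P_def by auto
  moreover have "q = p" if "P q" for q
  proof
    fix u
    have "q u - p u = 0" if "u \<in> V"
    proof (rule grounded_harmonic_eq_0)
      show "q s - p s = 0"
        using \<open>P q\<close> \<open>P p\<close> unfolding P_def by simp
      show "lap_apply V E (\<lambda>v. q v - p v) u = 0" if "u \<in> V - {s}" for u
        using \<open>P q\<close> \<open>P p\<close> that unfolding P_def lap_apply_diff by simp
    qed (use that in simp)
    then show "q u = p u"
      using \<open>P q\<close> \<open>P p\<close> unfolding P_def by (cases "u \<in> V") auto
  qed
  ultimately have "(THE q. P q) = p"
    by (rule the_equality)
  then show ?thesis
    unfolding eff_res_def Let_def lap_apply_def[symmetric] P_def[symmetric] using source by simp
qed

lemma dirichlet_lap_mult_vec: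
  fixes y :: "real vec"
  defines "vs \<equiv> free_verts V s"
  assumes "y \<in> carrier_vec (length vs)" "i < length vs"
  shows "(dirichlet_lap V E s *\<^sub>v y) $ i = lap_apply V E (extend_vec vs y) (vs ! i)"
proof -
  have V: "V = insert s (set vs)" "s \<notin> set vs"
    using set_free_verts[OF finite_V] source_in_V unfolding vs_def by auto
  have "lap_apply V E (extend_vec vs y) (vs ! i) = (\<Sum>v\<in>set vs. lap E (vs ! i) v * extend_vec vs y v)"
    unfolding lap_apply_def using V by (simp add: extend_vec_def)
  also have "\<dots> = (\<Sum>j<length vs. lap E (vs ! i) (vs ! j) * y $ j)"
    using distinct_free_verts[of V s] unfolding vs_def[symmetric]
    by (subst sum.reindex_bij_betw[OF bij_betw_nth, symmetric]) (auto simp: extend_vec_nth)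
  also have "\<dots> = (dirichlet_lap V E s *\<^sub>v y) $ i"
    using assms by (simp add: dirichlet_lap_def Let_def scalar_prod_def lessThan_atLeast0
        flip: vs_def)
  finally show ?thesis ..
qed

lemma det_dirichlet_lap_neq_0: "det (dirichlet_lap V E s) \<noteq> 0"
proof
  let ?vs = "free_verts V s"
  assume "det (dirichlet_lap V E s) = 0"
  then obtain y where y: "y \<in> carrier_vec (length ?vs)" "y \<noteq> 0\<^sub>v (length ?vs)"
    and ker: "dirichlet_lap V E s *\<^sub>v y = 0\<^sub>v (length ?vs)"
    using det_0_iff_vec_prod_zero_field[OF dirichlet_lap_carrier] by blast
  have "extend_vec ?vs y u = 0" if "u \<in> V" for u
  proof (rule grounded_harmonic_eq_0)
    show "extend_vec ?vs y s = 0"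
      using set_free_verts[OF finite_V] by (simp add: extend_vec_def)
    show "lap_apply V E (extend_vec ?vs y) u = 0" if "u \<in> V - {s}" for u
      using that ker dirichlet_lap_mult_vec[OF y(1)]
      by (metis set_free_verts[OF finite_V] in_set_conv_nth index_zero_vec(1))
  qed (use that in simp)
  then have "y $ i = 0" if "i < length ?vs" for i
    using that set_free_verts[OF finite_V] distinct_free_verts
    by (metis extend_vec_nth DiffD1 nth_mem)
  with y show False
    by (metis eq_vecI carrier_vecD index_zero_vec)
qed

theorem eff_res_eq_inverse_dirichlet_lap_diag:
  defines "vs \<equiv> free_verts V s"
  assumes Ai: "mat_inverse (dirichlet_lap V E s) = Some Ai" and "k < length vs"
  shows "eff_res V E s (vs ! k) = Ai $$ (k, k)"
proof -
  have Ai_carrier: "Ai \<in> carrier_mat (length vs) (length vs)"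
    and inverse: "dirichlet_lap V E s * Ai = 1\<^sub>m (length vs)"
    using mat_inverse(2)[OF dirichlet_lap_carrier Ai] unfolding vs_def by auto
  have "dirichlet_lap V E s *\<^sub>v col Ai k = col (dirichlet_lap V E s * Ai) k"
    using col_mult2[OF dirichlet_lap_carrier Ai_carrier[unfolded vs_def] assms(3)[unfolded vs_def]]
    by simp
  then have potential: "dirichlet_lap V E s *\<^sub>v col Ai k = unit_vec (length vs) k"
    using inverse assms(3) by simp
  have "eff_res V E s (vs ! k) = extend_vec vs (col Ai k) (vs ! k)"
  proof (rule eff_res_eqI)
    show "vs ! k \<in> V - {s}"
      using nth_mem[OF assms(3)] set_free_verts[OF finite_V] unfolding vs_def by simp
    show "extend_vec vs (col Ai k) u = 0" if "u \<notin> V" for u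
      using that set_free_verts[OF finite_V] by (simp add: extend_vec_def vs_def)
    show "extend_vec vs (col Ai k) s = 0"
      using set_free_verts[OF finite_V] by (simp add: extend_vec_def vs_def)
    show "lap_apply V E (extend_vec vs (col Ai k)) u = (if u = vs ! k then 1 else 0)"
      if "u \<in> V - {s}" for u
    proof -
      have "u \<in> set vs"
        using that set_free_verts[OF finite_V] unfolding vs_def by simp
      then obtain i where i: "i < length vs" "u = vs ! i"
        by (metis in_set_conv_nth)
      then have "lap_apply V E (extend_vec vs (col Ai k)) u = unit_vec (length vs) k $ i"
        using dirichlet_lap_mult_vec[of "col Ai k" i] potential Ai_carrier assms(3)
        by (simp add: vs_def)
      then show ?thesis
        using i assms(3) distinct_free_verts by (simp add: vs_def nth_eq_iff_index_eq)
    qed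
  qed
  also have "\<dots> = col Ai k $ k"
    unfolding vs_def by (rule extend_vec_nth[OF distinct_free_verts assms(3)[unfolded vs_def]])
  also have "\<dots> = Ai $$ (k, k)"
    using assms(3) Ai_carrier by simp
  finally show ?thesis .
qed

theorem H2_sq_ctrl_vec_eq_half_eff_res:
  assumes "t \<in> V - {s}"
  shows "H2_sq V E s (ctrl_vec V s t) = eff_res V E s t / 2"
proof -
  let ?vs = "free_verts V s" and ?A = "dirichlet_lap V E s"
  have "t \<in> set ?vs"
    using assms set_free_verts[OF finite_V] by simp
  then obtain k where k: "k < length ?vs" "t = ?vs ! k"
    by (metis in_set_conv_nth)
  have "?A \<in> Units (ring_mat TYPE(real) (length ?vs) ())"
    by (rule det_non_zero_imp_unit[OF dirichlet_lap_carrier det_dirichlet_lap_neq_0])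
  then obtain Ai where Ai: "mat_inverse ?A = Some Ai"
    using mat_inverse(1)[OF dirichlet_lap_carrier] by fastforce
  then have Ai_carrier: "Ai \<in> carrier_mat (length ?vs) (length ?vs)"
    using mat_inverse(2)[OF dirichlet_lap_carrier] by blast
  have "H2_sq V E s (ctrl_vec V s t) = (transpose_mat (ctrl_vec V s t) * Ai * ctrl_vec V s t) $$ (0, 0) / 2"
    using ctrl_vec_carrier[of V s t] Ai_carrier by (simp add: H2_sq_def Ai mat_trace_def)
  also have "\<dots> = Ai $$ (k, k) / 2"
    unfolding k(2) using unit_col_quadratic_form[OF Ai_carrier ctrl_vec_carrier col_ctrl_vec k(1)] k(1)
    by simp
  also have "\<dots> = eff_res V E s t / 2"
    using eff_res_eq_inverse_dirichlet_lap_diag[OF Ai k(1)] k(2) by simp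
  finally show ?thesis .
qed

end

lemma ttsp_wf:
  assumes "ttsp V E s t"
  shows "finite V \<and> s \<in> V \<and> t \<in> V \<and> s \<noteq> t \<and>
    (\<forall>(a, b, c) \<in># E. a \<in> V \<and> b \<in> V \<and> a \<noteq> b \<and> c > 0)"
  using assms
proof (induction rule: ttsp.induct)
  case (series V1 E1 s m V2 E2 t)
  then have "s \<noteq> t" by blast
  with series show ?case by auto
qed auto

lemma ttsp_connected:
  assumes "ttsp V E s t" and "\<And>a b c. (a, b, c) \<in># E \<Longrightarrow> f a = f b" and "u \<in> V"
  shows "f u = f s"
  using assms
proof (induction arbitrary: u rule: ttsp.induct)
  case (edge s t c)
  then show ?case by fastforce
next
  case (series V1 E1 s m V2 E2 t)
  have "f v = f s" if "v \<in> V1" for v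
    using series.IH(1) series.prems(1) that by (meson union_iff)
  moreover have "f v = f m" if "v \<in> V2" for v
    using series.IH(2) series.prems(1) that by (meson union_iff)
  moreover have "m \<in> V1"
    using series.hyps(3) by blast
  ultimately show ?case
    using series.prems(2) by (metis UnE)
next
  case (parallel V1 E1 s t V2 E2)
  have "f v = f s" if "v \<in> V1 \<or> v \<in> V2" for v
    using parallel.IH parallel.prems(1) that by (meson union_iff)
  then show ?case
    using parallel.prems(2) by blast
qed

lemma ttsp_grounded_network:
  assumes "ttsp V E s t"
  shows "grounded_network V E s"
proof
  show "finite V" "s \<in> V"
    and "\<And>a b c. (a, b, c) \<in># E \<Longrightarrow> a \<in> V \<and> b \<in> V \<and> a \<noteq> b"
    and "\<And>a b c. (a, b, c) \<in># E \<Longrightarrow> c > 0"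
    using ttsp_wf[OF assms] by auto
  show "\<And>f u. (\<And>a b c. (a, b, c) \<in># E \<Longrightarrow> f a = f b) \<Longrightarrow> u \<in> V \<Longrightarrow> f u = f s"
    using ttsp_connected[OF assms] by blast
qed

lemma ttsp_H2_sq_eq_half_eff_res:
  assumes "ttsp V E s t"
  shows "H2_sq V E s (ctrl_vec V s t) = eff_res V E s t / 2"
  using ttsp_wf[OF assms] grounded_network.H2_sq_ctrl_vec_eq_half_eff_res[OF ttsp_grounded_network[OF assms]]
  by simp

theorem lemma5:
  fixes V1 :: "nat set" and E1 :: "wedge multiset" and s1 t1 :: nat
    and s2 t2 :: nat and c :: real
  assumes G1: "ttsp V1 E1 s1 t1"
    and G2: "s2 \<noteq> t2" "c > 0"
    and eq: "eff_res V1 E1 s1 t1 = eff_res {s2, t2} {#(s2, t2, c)#} s2 t2"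
  shows "H2_sq V1 E1 s1 (ctrl_vec V1 s1 t1)
       = H2_sq {s2, t2} {#(s2, t2, c)#} s2 (ctrl_vec {s2, t2} s2 t2)"
  using ttsp_H2_sq_eq_half_eff_res[OF G1] ttsp_H2_sq_eq_half_eff_res[OF ttsp.edge[OF G2]] eq
  by simp

end
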